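(* Let $k>d\ge1$ be integers, $G$ a finite abelian group, $A\subseteq G$, $\delta=|A|/|G|$, and let $F$ be any $(d+1)$-simple $k$-uniform hypergraph. Then $$\big|t(F,\Gamma^{(k)}_A)-\delta^{e(F)}\big|\le e(F)\,\|\Gamma^{(d+1)}_A-\delta\|_{\square^{d+1}_d}\le e(F)\,\|A-\delta\|_{U^{d+1}}.$$
   Context: $\Gamma^{(m)}_A:G^m\to\{0,1\}$ is $\Gamma^{(m)}_A(x_1,\dots,x_m)=A(x_1+\dots+x_m)$ (sets identified with indicator functions). For a $k$-uniform hypergraph $F$ whose edges are $k$-element subsets of $V(F)$, $t(F,\Gamma^{(k)}_A)=\mathbb{E}_{\mathbf{x}\in G^{V(F)}}\prod_{e\in E(F)}A(\sum_{v\in e}x_v)$. $F$ is $(d+1)$-simple if each edge $e$ contains a set of $d+1$ vertices not contained in any other edge. For $g:G^{d+1}\to\mathbb{R}$, $\|g\|_{\square^{d+1}_d}=\max|\mathbb{E}_{\mathbf{x}\in G^{d+1}}[g(\mathbf{x})\prod_{B\in\binom{[d+1]}{d}}S_B(\mathbf{x}_B)]|$ over subsets $S_B\subseteq G^B$. $\|f\|_{U^{m}}=\big(\mathbb{E}_{x,h_1,\dots,h_m}\prod_{\omega\in\{0,1\}^m}f(x+\sum_i\omega_ih_i)\big)^{1/2^m}$. *)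

theory Defs
  imports Complex_Main "HOL-Library.FuncSet"
begin

definition avg :: "'a set \<Rightarrow> ('a \<Rightarrow> real) \<Rightarrow> real" where
  "avg S f = (\<Sum>x\<in>S. f x) / real (card S)"

definition ind :: "'a set \<Rightarrow> 'a \<Rightarrow> real" where
  "ind A x = (if x \<in> A then 1 else 0)"

definition density :: "'g::finite set \<Rightarrow> real" where
  "density A = real (card A) / real (card (UNIV :: 'g set))"

definition cube :: "nat \<Rightarrow> (nat \<Rightarrow> 'g::finite) set" where
  "cube m = ({1..m} \<rightarrow>\<^sub>E (UNIV :: 'g set))"

definition Gamma :: "nat \<Rightarrow> 'g::{finite,comm_monoid_add} set \<Rightarrow> (nat \<Rightarrow> 'g) \<Rightarrow> real" where
  "Gamma m A x = ind A (\<Sum>i\<in>{1..m}. x i)"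

definition hom_density :: "'v set \<Rightarrow> 'v set set \<Rightarrow> 'g::{finite,comm_monoid_add} set \<Rightarrow> real" where
  "hom_density V E A =
     avg (V \<rightarrow>\<^sub>E (UNIV :: 'g set)) (\<lambda>x. \<Prod>e\<in>E. ind A (\<Sum>v\<in>e. x v))"

definition uniform_hypergraph :: "nat \<Rightarrow> 'v set \<Rightarrow> 'v set set \<Rightarrow> bool" where
  "uniform_hypergraph k V E \<longleftrightarrow> finite V \<and> (\<forall>e\<in>E. e \<subseteq> V \<and> card e = k)"

definition simple_hypergraph :: "nat \<Rightarrow> 'v set set \<Rightarrow> bool" where
  "simple_hypergraph r E \<longleftrightarrow>
     (\<forall>e\<in>E. \<exists>S. S \<subseteq> e \<and> card S = r \<and> (\<forall>e'\<in>E. e' \<noteq> e \<longrightarrow> \<not> S \<subseteq> e'))"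

definition box_norm :: "nat \<Rightarrow> ((nat \<Rightarrow> 'g::finite) \<Rightarrow> real) \<Rightarrow> real" where
  "box_norm d g = Max ((\<lambda>S. \<bar>avg (cube (d+1))
        (\<lambda>x. g x * (\<Prod>B\<in>{B. B \<subseteq> {1..d+1} \<and> card B = d}. ind (S B) (restrict x B)))\<bar>)
      ` {S. \<forall>B. B \<subseteq> {1..d+1} \<and> card B = d \<longrightarrow> S B \<subseteq> (B \<rightarrow>\<^sub>E (UNIV :: 'g set))})"

text \<open>Gowers U^m norm; omega \<in> {0,1}^m identified with the subset {i. omega_i = 1} of {1..m}.\<close>
definition gowers_norm :: "nat \<Rightarrow> ('g::{finite,ab_group_add} \<Rightarrow> real) \<Rightarrow> real" where
  "gowers_norm m f = root (2^m)
     (avg (UNIV \<times> cube m)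
        (\<lambda>(x, h). \<Prod>\<omega>\<in>Pow {1..m}. f (x + (\<Sum>i\<in>\<omega>. h i))))"

end

theory Submission imports Defs begin

text \<open>Replace the factors of \<open>t(F, \<Gamma>\<^bsup>(k)\<^esup>\<^sub>A)\<close> by \<open>\<delta>\<close> one edge at a time; the error telescopes
  into \<open>e(F)\<close> terms. In the term of an edge \<open>e\<close>, fix all vertices outside a \<open>(d+1)\<close>-set
  \<open>S \<subseteq> e\<close> contained in no other edge: the factor of \<open>e\<close> becomes a translate of
  \<open>\<Gamma>\<^bsup>(d+1)\<^esup>\<^sub>A - \<delta>\<close> in the \<open>S\<close>-coordinates, and every other factor misses a vertex of \<open>S\<close>.
  Grouping those factors by a missed coordinate yields exactly the \<open>0/1\<close> test functions of the
  box norm. The second inequality is the Gowers--Cauchy--Schwarz inequality: one application of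
  Cauchy--Schwarz per coordinate removes the bounded weights, each time doubling the function,
  until \<open>\<parallel>f\<parallel>\<^bsub>U\<^bsup>d+1\<^esup>\<^esub>\<close> is reached.\<close>

lemma avg_add: "avg S (\<lambda>x. f x + g x) = avg S f + avg S g"
  unfolding avg_def by (simp add: sum.distrib add_divide_distrib)

lemma avg_diff: "avg S (\<lambda>x. f x - g x) = avg S f - avg S g"
  unfolding avg_def by (simp add: sum_subtractf diff_divide_distrib)

lemma avg_cmult: "avg S (\<lambda>x. c * f x) = c * avg S f"
  unfolding avg_def by (simp add: sum_distrib_left)

lemma avg_multc: "avg S (\<lambda>x. f x * c) = avg S f * c"
  unfolding avg_def by (simp add: sum_distrib_right)

lemma avg_const: "finite S \<Longrightarrow> S \<noteq> {} \<Longrightarrow> avg S (\<lambda>x. c) = c"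
  unfolding avg_def by simp

lemma avg_mono: "(\<And>x. x \<in> S \<Longrightarrow> f x \<le> g x) \<Longrightarrow> avg S f \<le> avg S g"
  unfolding avg_def by (intro divide_right_mono sum_mono) auto

lemma avg_cong: "(\<And>x. x \<in> S \<Longrightarrow> f x = g x) \<Longrightarrow> avg S f = avg S g"
  unfolding avg_def by (simp cong: sum.cong)

lemma avg_nonneg: "(\<And>x. x \<in> S \<Longrightarrow> 0 \<le> f x) \<Longrightarrow> 0 \<le> avg S f"
  unfolding avg_def by (simp add: sum_nonneg)

lemma abs_avg_le: "\<bar>avg S f\<bar> \<le> avg S (\<lambda>x. \<bar>f x\<bar>)"
  unfolding avg_def by (simp add: abs_divide divide_right_mono sum_abs)

lemma abs_avg_le_bound:
  assumes "finite S" "S \<noteq> {}" "\<And>x. x \<in> S \<Longrightarrow> \<bar>f x\<bar> \<le> c"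
  shows "\<bar>avg S f\<bar> \<le> c"
proof -
  have "\<bar>avg S f\<bar> \<le> avg S (\<lambda>x. \<bar>f x\<bar>)" by (rule abs_avg_le)
  also have "\<dots> \<le> avg S (\<lambda>x. c)" using assms(3) by (rule avg_mono)
  also have "\<dots> = c" using assms(1,2) by (rule avg_const)
  finally show ?thesis .
qed

lemma avg_swap: "avg S (\<lambda>x. avg T (\<lambda>y. F x y)) = avg T (\<lambda>y. avg S (\<lambda>x. F x y))"
  unfolding avg_def by (simp add: sum_divide_distrib[symmetric] sum.swap[of _ S T])

lemma avg_cartesian:
  "finite S \<Longrightarrow> finite T \<Longrightarrow> avg (S \<times> T) (\<lambda>(x, y). F x y) = avg S (\<lambda>x. avg T (\<lambda>y. F x y))"
  unfolding avg_def
  by (simp add: sum.cartesian_product[symmetric] card_cartesian_product sum_divide_distrib[symmetric])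

lemma power2_avg_le:
  assumes "finite S" "S \<noteq> {}"
  shows "(avg S f)\<^sup>2 \<le> avg S (\<lambda>x. (f x)\<^sup>2)"
proof -
  define m where "m = avg S f"
  have "0 \<le> avg S (\<lambda>x. (f x - m)\<^sup>2)" by (rule avg_nonneg) auto
  also have "avg S (\<lambda>x. (f x - m)\<^sup>2) = avg S (\<lambda>x. (f x)\<^sup>2 - 2 * m * f x + m\<^sup>2)"
    by (rule avg_cong) (simp add: power2_eq_square algebra_simps)
  also have "\<dots> = avg S (\<lambda>x. (f x)\<^sup>2) - m\<^sup>2"
    using assms by (simp add: avg_add avg_diff avg_cmult avg_const m_def power2_eq_square)
  finally show ?thesis by (simp add: m_def)
qed

lemma power_two_pow_avg_le:
  assumes "finite S" "S \<noteq> {}"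
  shows "(avg S f) ^ 2 ^ k \<le> avg S (\<lambda>x. (f x) ^ 2 ^ k)"
proof (induction k arbitrary: f)
  case 0
  then show ?case by simp
next
  case (Suc k)
  have "(avg S f) ^ 2 ^ Suc k = ((avg S f)\<^sup>2) ^ 2 ^ k"
    by (simp add: power_mult[symmetric] mult.commute)
  also have "\<dots> \<le> (avg S (\<lambda>x. (f x)\<^sup>2)) ^ 2 ^ k"
    by (rule power_mono[OF power2_avg_le[OF assms]]) simp
  also have "\<dots> \<le> avg S (\<lambda>x. ((f x)\<^sup>2) ^ 2 ^ k)" by (rule Suc.IH)
  also have "\<dots> = avg S (\<lambda>x. (f x) ^ 2 ^ Suc k)"
    by (simp add: power_mult[symmetric] mult.commute)
  finally show ?case .
qed

lemma avg_UNIV_shift: "avg (UNIV :: 'g::{finite,ab_group_add} set) (\<lambda>x. F (x + y)) = avg UNIV F"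
proof -
  have "(\<Sum>x\<in>UNIV. F (x + y)) = (\<Sum>x\<in>UNIV. F x)"
    by (rule sum.reindex_bij_witness[where i="\<lambda>x. x - y" and j="\<lambda>x. x + y"]) auto
  then show ?thesis unfolding avg_def by simp
qed

lemma power2_avg_UNIV:
  "(avg (UNIV :: 'g::{finite,ab_group_add} set) \<Phi>)\<^sup>2
     = avg UNIV (\<lambda>y. avg UNIV (\<lambda>h. \<Phi> y * \<Phi> (y + h)))"
proof -
  have "(avg (UNIV :: 'g set) \<Phi>)\<^sup>2 = avg UNIV (\<lambda>y. \<Phi> y * avg UNIV \<Phi>)"
    by (simp add: avg_multc power2_eq_square)
  also have "\<dots> = avg UNIV (\<lambda>y. avg UNIV (\<lambda>h. \<Phi> y * \<Phi> (y + h)))"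
    using avg_UNIV_shift[of \<Phi>] by (simp add: avg_cmult add.commute)
  finally show ?thesis .
qed

lemma finite_cube: "finite (cube m :: (nat \<Rightarrow> 'g::finite) set)"
  unfolding cube_def by (rule finite_PiE) auto

lemma cube_nonempty: "(cube m :: (nat \<Rightarrow> 'g::finite) set) \<noteq> {}"
  unfolding cube_def by (simp add: PiE_eq_empty_iff)

lemma cube_0: "cube 0 = {\<lambda>_. undefined}"
  unfolding cube_def by auto

lemma sum_cube_Suc:
  "(\<Sum>x\<in>(cube (Suc m) :: (nat \<Rightarrow> 'g::finite) set). F x)
     = (\<Sum>x\<in>cube m. \<Sum>y\<in>UNIV. F (x(Suc m := y)))"
proof -
  have "(\<Sum>x\<in>(cube (Suc m) :: (nat \<Rightarrow> 'g) set). F x)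
      = (\<Sum>p\<in>cube m \<times> UNIV. F ((fst p)(Suc m := snd p)))"
    by (rule sum.reindex_bij_witness[where i="\<lambda>p. (fst p)(Suc m := snd p)"
          and j="\<lambda>x. (x(Suc m := undefined), x (Suc m))"])
       (auto simp: cube_def PiE_def extensional_def fun_eq_iff)
  also have "\<dots> = (\<Sum>x\<in>cube m. \<Sum>y\<in>UNIV. F (x(Suc m := y)))"
    by (simp add: sum.cartesian_product split_beta)
  finally show ?thesis .
qed

lemma avg_cube_Suc:
  "avg (cube (Suc m) :: (nat \<Rightarrow> 'g::finite) set) F
     = avg (cube m) (\<lambda>x. avg UNIV (\<lambda>y. F (x(Suc m := y))))"
proof -
  have "card (cube (Suc m) :: (nat \<Rightarrow> 'g) set) = card (cube m :: (nat \<Rightarrow> 'g) set) * card (UNIV :: 'g set)"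
    using sum_cube_Suc[where F="\<lambda>_. 1::nat" and m=m] by simp
  then show ?thesis
    unfolding avg_def by (simp add: sum_cube_Suc sum_divide_distrib[symmetric])
qed

lemma sum_upd_Suc: "(\<Sum>i\<in>{1..Suc m}. (x(Suc m := y)) i) = (\<Sum>i\<in>{1..m}. x i) + y"
proof -
  have "{1..Suc m} = insert (Suc m) {1..m}" by auto
  then have "(\<Sum>i\<in>{1..Suc m}. (x(Suc m := y)) i) = y + (\<Sum>i\<in>{1..m}. (x(Suc m := y)) i)" by simp
  also have "(\<Sum>i\<in>{1..m}. (x(Suc m := y)) i) = (\<Sum>i\<in>{1..m}. x i)" by (rule sum.cong) auto
  finally show ?thesis by (simp add: add.commute)
qed

section \<open>Gowers averages\<close>

definition gowers_avg :: "nat \<Rightarrow> ('g::{finite,ab_group_add} \<Rightarrow> real) \<Rightarrow> real" where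
  "gowers_avg m f = avg (UNIV \<times> cube m) (\<lambda>(x, h). \<Prod>\<omega>\<in>Pow {1..m}. f (x + (\<Sum>i\<in>\<omega>. h i)))"

lemma gowers_norm_eq_root: "gowers_norm m f = root (2 ^ m) (gowers_avg m f)"
  unfolding gowers_norm_def gowers_avg_def ..

lemma gowers_avg_iterated:
  "gowers_avg m f = avg UNIV (\<lambda>x. avg (cube m) (\<lambda>h. \<Prod>\<omega>\<in>Pow {1..m}. f (x + (\<Sum>i\<in>\<omega>. h i))))"
  unfolding gowers_avg_def by (simp add: avg_cartesian finite_cube)

lemma gowers_avg_0: "gowers_avg 0 f = avg UNIV f"
  unfolding gowers_avg_iterated cube_0 avg_def by simp

lemma gowers_avg_shift: "gowers_avg m (\<lambda>z. f (z + y)) = gowers_avg m f"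
proof -
  have "avg UNIV (\<lambda>x. \<Prod>\<omega>\<in>Pow {1..m}. f (x + (\<Sum>i\<in>\<omega>. h i) + y))
      = avg UNIV (\<lambda>x. \<Prod>\<omega>\<in>Pow {1..m}. f (x + (\<Sum>i\<in>\<omega>. h i)))" for h :: "nat \<Rightarrow> 'a"
    using avg_UNIV_shift[of "\<lambda>x. \<Prod>\<omega>\<in>Pow {1..m}. f (x + (\<Sum>i\<in>\<omega>. h i))" y]
    by (simp add: algebra_simps)
  then show ?thesis
    by (simp add: gowers_avg_iterated avg_swap[where S=UNIV])
qed

lemma prod_Pow_Suc_upd:
  fixes f :: "'g::ab_group_add \<Rightarrow> real"
  shows "(\<Prod>\<omega>\<in>Pow {1..Suc m}. f (x + (\<Sum>i\<in>\<omega>. (k(Suc m := h)) i)))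
     = (\<Prod>\<omega>\<in>Pow {1..m}. f (x + (\<Sum>i\<in>\<omega>. k i)) * f (x + (\<Sum>i\<in>\<omega>. k i) + h))"
proof -
  let ?F = "\<lambda>\<omega>. f (x + (\<Sum>i\<in>\<omega>. (k(Suc m := h)) i))"
  have inj: "inj_on (insert (Suc m)) (Pow {1..m})"
    by (rule inj_onI) (metis Pow_iff atLeastAtMost_iff insert_ident not_less_eq_eq subsetD order_refl)
  have old: "(\<Sum>i\<in>\<omega>. (k(Suc m := h)) i) = (\<Sum>i\<in>\<omega>. k i)" if "\<omega> \<in> Pow {1..m}" for \<omega>
    using that by (intro sum.cong) auto
  have new: "?F (insert (Suc m) \<omega>) = f (x + (\<Sum>i\<in>\<omega>. k i) + h)" if "\<omega> \<in> Pow {1..m}" for \<omega>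
  proof -
    have "finite \<omega>" "Suc m \<notin> \<omega>" using that finite_subset[of \<omega> "{1..m}"] by auto
    then show ?thesis using old[OF that] by (simp add: ac_simps)
  qed
  have "Pow {1..Suc m} = Pow {1..m} \<union> insert (Suc m) ` Pow {1..m}"
    by (simp add: atLeastAtMostSuc_conv Pow_insert)
  then have "prod ?F (Pow {1..Suc m}) = prod ?F (Pow {1..m}) * prod ?F (insert (Suc m) ` Pow {1..m})"
    by (simp only:) (rule prod.union_disjoint, auto)
  also have "prod ?F (insert (Suc m) ` Pow {1..m}) = (\<Prod>\<omega>\<in>Pow {1..m}. f (x + (\<Sum>i\<in>\<omega>. k i) + h))"
    unfolding prod.reindex[OF inj] comp_def by (rule prod.cong[OF refl new])
  also have "prod ?F (Pow {1..m}) = (\<Prod>\<omega>\<in>Pow {1..m}. f (x + (\<Sum>i\<in>\<omega>. k i)))"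
    by (rule prod.cong) (simp_all only: old refl)
  finally show ?thesis by (simp add: prod.distrib)
qed

lemma gowers_avg_Suc: "gowers_avg (Suc m) f = avg UNIV (\<lambda>h. gowers_avg m (\<lambda>z. f z * f (z + h)))"
proof -
  have "gowers_avg (Suc m) f = avg UNIV (\<lambda>x. avg (cube m) (\<lambda>k. avg UNIV (\<lambda>h.
      \<Prod>\<omega>\<in>Pow {1..m}. f (x + (\<Sum>i\<in>\<omega>. k i)) * f (x + (\<Sum>i\<in>\<omega>. k i) + h))))"
    by (simp only: gowers_avg_iterated avg_cube_Suc prod_Pow_Suc_upd)
  also have "\<dots> = avg UNIV (\<lambda>x. avg UNIV (\<lambda>h. avg (cube m) (\<lambda>k.
      \<Prod>\<omega>\<in>Pow {1..m}. f (x + (\<Sum>i\<in>\<omega>. k i)) * f (x + (\<Sum>i\<in>\<omega>. k i) + h))))"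
    by (intro avg_cong) (rule avg_swap)
  also have "\<dots> = avg UNIV (\<lambda>h. avg UNIV (\<lambda>x. avg (cube m) (\<lambda>k.
      \<Prod>\<omega>\<in>Pow {1..m}. f (x + (\<Sum>i\<in>\<omega>. k i)) * f (x + (\<Sum>i\<in>\<omega>. k i) + h))))"
    by (rule avg_swap)
  also have "\<dots> = avg UNIV (\<lambda>h. gowers_avg m (\<lambda>z. f z * f (z + h)))"
    by (simp only: gowers_avg_iterated)
  finally show ?thesis .
qed

section \<open>The Gowers--Cauchy--Schwarz inequality\<close>

text \<open>A coordinate-free family \<open>u\<close> is a family of functions \<open>u j\<close> on \<open>G\<^bsup>[m] - {j}\<^esup>\<close>, as in the
  box norm.\<close>
definition coordinate_free :: "(nat \<Rightarrow> (nat \<Rightarrow> 'a) \<Rightarrow> real) \<Rightarrow> bool" where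
  "coordinate_free u \<longleftrightarrow> (\<forall>j x a. u j (x(j := a)) = u j x)"

definition weighted_avg ::
    "nat \<Rightarrow> ('g::{finite,comm_monoid_add} \<Rightarrow> real) \<Rightarrow> (nat \<Rightarrow> (nat \<Rightarrow> 'g) \<Rightarrow> real) \<Rightarrow> real" where
  "weighted_avg m f u = avg (cube m) (\<lambda>x. f (\<Sum>i\<in>{1..m}. x i) * (\<Prod>j\<in>{1..m}. u j x))"

lemma weighted_avg_0: "weighted_avg 0 f u = f 0"
  unfolding weighted_avg_def cube_0 avg_def by simp

lemma coordinate_free_fix_coordinate:
  assumes "coordinate_free u"
  shows "coordinate_free (\<lambda>j x. u j (x(n := y)) * u j (x(n := y')))"
proof -
  have "x(j := a, n := z) = (x(n := z))(j := (if j = n then z else a))" for x :: "nat \<Rightarrow> 'a" and j a z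
    by (auto simp: fun_eq_iff)
  then show ?thesis
    using assms unfolding coordinate_free_def by simp
qed

lemma bounded_fix_coordinate:
  assumes "\<And>j x. \<bar>u j x\<bar> \<le> (1::real)"
  shows "\<bar>u j (x(n := y)) * u j (x(n := y'))\<bar> \<le> 1"
  unfolding abs_mult by (intro mult_le_one assms abs_ge_zero)

text \<open>One Cauchy--Schwarz step: the last weight does not depend on the last coordinate, so it
  is discarded, and squaring the inner average over the last coordinate doubles \<open>f\<close>.\<close>
lemma power2_weighted_avg_Suc_le:
  fixes f :: "'g::{finite,ab_group_add} \<Rightarrow> real"
  assumes u_free: "coordinate_free u" and u_bounded: "\<And>j x. \<bar>u j x\<bar> \<le> 1"
  shows "(weighted_avg (Suc m) f u)\<^sup>2 \<le> avg UNIV (\<lambda>h. avg UNIV (\<lambda>y.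
     weighted_avg m (\<lambda>z. f (z + y) * f (z + y + h))
       (\<lambda>j x. u j (x(Suc m := y)) * u j (x(Suc m := y + h)))))"
proof -
  define \<psi> where "\<psi> x y = f ((\<Sum>i\<in>{1..m}. x i) + y) * (\<Prod>j\<in>{1..m}. u j (x(Suc m := y)))" for x y
  have u_last: "u (Suc m) (x(Suc m := y)) = u (Suc m) x" for x y
    using u_free unfolding coordinate_free_def by simp
  have "weighted_avg (Suc m) f u = avg (cube m) (\<lambda>x. avg UNIV (\<lambda>y. u (Suc m) x * \<psi> x y))"
    unfolding weighted_avg_def avg_cube_Suc
    by (intro avg_cong) (simp add: sum_upd_Suc u_last \<psi>_def mult_ac)
  also have "\<dots> = avg (cube m) (\<lambda>x. u (Suc m) x * avg UNIV (\<psi> x))"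
    by (simp add: avg_cmult)
  finally have "(weighted_avg (Suc m) f u)\<^sup>2 \<le> avg (cube m) (\<lambda>x. (u (Suc m) x * avg UNIV (\<psi> x))\<^sup>2)"
    using power2_avg_le[OF finite_cube cube_nonempty] by simp
  also have "\<dots> \<le> avg (cube m) (\<lambda>x. (avg UNIV (\<psi> x))\<^sup>2)"
  proof (rule avg_mono)
    fix x
    have "(u (Suc m) x)\<^sup>2 \<le> 1" using u_bounded by (simp add: abs_square_le_1)
    then show "(u (Suc m) x * avg UNIV (\<psi> x))\<^sup>2 \<le> (avg UNIV (\<psi> x))\<^sup>2"
      unfolding power_mult_distrib by (simp add: mult_left_le_one_le)
  qed
  also have "\<dots> = avg (cube m) (\<lambda>x. avg UNIV (\<lambda>y. avg UNIV (\<lambda>h. \<psi> x y * \<psi> x (y + h))))"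
    by (simp only: power2_avg_UNIV)
  also have "\<dots> = avg UNIV (\<lambda>y. avg UNIV (\<lambda>h. avg (cube m) (\<lambda>x. \<psi> x y * \<psi> x (y + h))))"
    by (simp only: avg_swap[of "cube m"])
  also have "\<dots> = avg UNIV (\<lambda>h. avg UNIV (\<lambda>y. avg (cube m) (\<lambda>x. \<psi> x y * \<psi> x (y + h))))"
    by (rule avg_swap)
  also have "\<dots> = avg UNIV (\<lambda>h. avg UNIV (\<lambda>y.
     weighted_avg m (\<lambda>z. f (z + y) * f (z + y + h))
       (\<lambda>j x. u j (x(Suc m := y)) * u j (x(Suc m := y + h)))))"
    unfolding weighted_avg_def \<psi>_def
    by (intro avg_cong) (simp add: prod.distrib add.assoc mult_ac)
  finally show ?thesis .
qed

theorem gowers_cauchy_schwarz: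
  fixes f :: "'g::{finite,ab_group_add} \<Rightarrow> real"
  assumes "coordinate_free u" and "\<And>j x. \<bar>u j x\<bar> \<le> 1"
  shows "(weighted_avg (Suc m) f u) ^ 2 ^ Suc m \<le> gowers_avg (Suc m) f"
  using assms
proof (induction m arbitrary: f u)
  case 0
  have "(weighted_avg (Suc 0) f u) ^ 2 ^ Suc 0 \<le> avg UNIV (\<lambda>h. avg UNIV (\<lambda>y. f y * f (y + h)))"
    using power2_weighted_avg_Suc_le[OF 0, of 0 f] by (simp add: weighted_avg_0)
  also have "\<dots> = gowers_avg (Suc 0) f"
    by (simp add: gowers_avg_Suc gowers_avg_0)
  finally show ?case .
next
  case (Suc m)
  define I where "I h y = weighted_avg (Suc m) (\<lambda>z. f (z + y) * f (z + y + h))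
      (\<lambda>j x. u j (x(Suc (Suc m) := y)) * u j (x(Suc (Suc m) := y + h)))" for h y
  have "(weighted_avg (Suc (Suc m)) f u) ^ 2 ^ Suc (Suc m)
      = ((weighted_avg (Suc (Suc m)) f u)\<^sup>2) ^ 2 ^ Suc m"
    by (simp add: power_mult[symmetric] mult.commute)
  also have "\<dots> \<le> (avg UNIV (\<lambda>h. avg UNIV (\<lambda>y. I h y))) ^ 2 ^ Suc m"
    unfolding I_def by (intro power_mono power2_weighted_avg_Suc_le Suc.prems) simp
  also have "\<dots> \<le> avg UNIV (\<lambda>h. avg UNIV (\<lambda>y. (I h y) ^ 2 ^ Suc m))"
    by (intro order.trans[OF power_two_pow_avg_le] avg_mono power_two_pow_avg_le) auto
  also have "\<dots> \<le> avg UNIV (\<lambda>h. avg UNIV (\<lambda>y::'g. gowers_avg (Suc m) (\<lambda>z. f (z + y) * f (z + y + h))))"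
    unfolding I_def
    by (intro avg_mono Suc.IH coordinate_free_fix_coordinate bounded_fix_coordinate Suc.prems)
  also have "\<dots> = avg UNIV (\<lambda>h. avg UNIV (\<lambda>y::'g. gowers_avg (Suc m) (\<lambda>z. f z * f (z + h))))"
    using gowers_avg_shift[of "Suc m" "\<lambda>z. f z * f (z + _)"] by simp
  also have "\<dots> = gowers_avg (Suc (Suc m)) f"
    by (simp add: gowers_avg_Suc avg_const)
  finally show ?case .
qed

section \<open>The box norm\<close>

lemma box_faces_eq:
  "{B. B \<subseteq> {1..d+1} \<and> card B = d} = (\<lambda>j. {1..d+1} - {j}) ` {1..(d+1::nat)}"
proof (intro equalityI subsetI)
  fix B assume "B \<in> {B. B \<subseteq> {1..d+1} \<and> card B = d}"
  then have B: "B \<subseteq> {1..d+1}" "card B = d" by auto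
  have "B \<noteq> {1..d+1}"
  proof
    assume "B = {1..d+1}"
    with B(2) show False by simp
  qed
  with B(1) obtain j where j: "j \<in> {1..d+1}" "j \<notin> B" by blast
  then have "B \<subseteq> {1..d+1} - {j}" "card ({1..d+1} - {j}) = card B" using B by auto
  then have "B = {1..d+1} - {j}" by (intro card_subset_eq) auto
  with j show "B \<in> (\<lambda>j. {1..d+1} - {j}) ` {1..d+1}" by auto
qed auto

lemma prod_box_faces:
  "(\<Prod>B\<in>{B. B \<subseteq> {1..d+1} \<and> card B = d}. h B) = (\<Prod>j\<in>{1..(d+1::nat)}. h ({1..d+1} - {j}))"
proof -
  have "inj_on (\<lambda>j. {1..d+1} - {j}) {1..(d+1::nat)}"
    unfolding inj_on_def by auto
  then show ?thesis by (simp only: box_faces_eq prod.reindex comp_def)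
qed

definition box_families :: "nat \<Rightarrow> (nat set \<Rightarrow> (nat \<Rightarrow> 'g::finite) set) set" where
  "box_families d = {S. \<forall>B. B \<subseteq> {1..d+1} \<and> card B = d \<longrightarrow> S B \<subseteq> (B \<rightarrow>\<^sub>E (UNIV :: 'g set))}"

definition box_correlation ::
    "nat \<Rightarrow> ((nat \<Rightarrow> 'g::finite) \<Rightarrow> real) \<Rightarrow> (nat set \<Rightarrow> (nat \<Rightarrow> 'g) set) \<Rightarrow> real" where
  "box_correlation d g S = \<bar>avg (cube (d+1))
     (\<lambda>x. g x * (\<Prod>B\<in>{B. B \<subseteq> {1..d+1} \<and> card B = d}. ind (S B) (restrict x B)))\<bar>"

lemma box_norm_eq_Max: "box_norm d g = Max (box_correlation d g ` box_families d)"
  unfolding box_norm_def box_correlation_def box_families_def ..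

lemma empty_family_in_box_families: "(\<lambda>_. {}) \<in> box_families d"
  unfolding box_families_def by auto

text \<open>Only the values of a family on the faces matter, and there are finitely many of those.\<close>
lemma finite_box_correlations: "finite (box_correlation d g ` box_families d)"
proof -
  let ?Bs = "{B. B \<subseteq> {1..d+1} \<and> card B = d}"
  let ?R = "PiE ?Bs (\<lambda>B. Pow (B \<rightarrow>\<^sub>E (UNIV :: 'a set)))"
  have "box_correlation d g ` box_families d \<subseteq> box_correlation d g ` ?R"
  proof
    fix v assume "v \<in> box_correlation d g ` box_families d"
    then obtain S where S: "S \<in> box_families d" "v = box_correlation d g S" by auto
    have "box_correlation d g S = box_correlation d g (restrict S ?Bs)"
      unfolding box_correlation_def
      by (intro arg_cong[where f=abs] avg_cong arg_cong[where f="\<lambda>p. g _ * p"] prod.cong) auto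
    moreover have "restrict S ?Bs \<in> ?R"
      using S(1) unfolding box_families_def by auto
    ultimately show "v \<in> box_correlation d g ` ?R"
      using S(2) by blast
  qed
  moreover have "finite ?Bs" by (rule finite_subset[of _ "Pow {1..d+1}"]) auto
  then have "finite ?R"
  proof (rule finite_PiE)
    fix B assume "B \<in> ?Bs"
    then have "finite B" by (auto intro: finite_subset)
    then show "finite (Pow (B \<rightarrow>\<^sub>E (UNIV :: 'a set)))" by (simp add: finite_PiE)
  qed
  ultimately show ?thesis by (rule finite_subset[OF _ finite_imageI])
qed

lemma box_correlation_le_box_norm: "S \<in> box_families d \<Longrightarrow> box_correlation d g S \<le> box_norm d g"
  unfolding box_norm_eq_Max by (rule Max_ge[OF finite_box_correlations]) auto

lemma restrict_upd_notin: "j \<notin> B \<Longrightarrow> restrict (x(j := a)) B = restrict x B"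
  by (auto simp: restrict_def fun_eq_iff)

lemma box_norm_le:
  assumes "\<And>S. S \<in> box_families d \<Longrightarrow> box_correlation d g S \<le> c"
  shows "box_norm d g \<le> c"
  unfolding box_norm_eq_Max using assms empty_family_in_box_families
  by (subst Max_le_iff[OF finite_box_correlations]) auto

lemma box_correlation_sum_le_gowers_norm:
  fixes f :: "'g::{finite,ab_group_add} \<Rightarrow> real"
  shows "box_correlation d (\<lambda>x. f (\<Sum>i\<in>{1..d+1}. x i)) S \<le> gowers_norm (d+1) f"
proof -
  define u where "u j x = ind (S ({1..d+1} - {j})) (restrict x ({1..d+1} - {j}))" for j x
  have "coordinate_free u"
    unfolding coordinate_free_def u_def by (simp add: restrict_upd_notin)
  moreover have "\<bar>u j x\<bar> \<le> 1" for j x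
    unfolding u_def ind_def by simp
  ultimately have "(weighted_avg (Suc d) f u) ^ 2 ^ Suc d \<le> gowers_avg (Suc d) f"
    by (rule gowers_cauchy_schwarz)
  then have "root (2 ^ Suc d) (\<bar>weighted_avg (Suc d) f u\<bar> ^ 2 ^ Suc d) \<le> gowers_norm (d+1) f"
    by (simp add: power_even_abs gowers_norm_eq_root)
  moreover have "box_correlation d (\<lambda>x. f (\<Sum>i\<in>{1..d+1}. x i)) S = \<bar>weighted_avg (Suc d) f u\<bar>"
    unfolding box_correlation_def weighted_avg_def u_def prod_box_faces by simp
  ultimately show ?thesis
    by (simp add: real_root_power_cancel)
qed

text \<open>Such a weight \<open>u j\<close> is the indicator of a subset of the face \<open>[d+1] - {j}\<close>: evaluate it
  with coordinate \<open>j\<close> set to \<open>0\<close>.\<close>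
lemma abs_weighted_avg_le_box_norm:
  fixes g :: "(nat \<Rightarrow> 'g::{finite,zero}) \<Rightarrow> real"
  assumes u_free: "coordinate_free u" and u_01: "\<And>j x. u j x \<in> {0, 1}"
  shows "\<bar>avg (cube (d+1)) (\<lambda>x. g x * (\<Prod>j\<in>{1..d+1}. u j x))\<bar> \<le> box_norm d g"
proof -
  define missing where "missing B = the_elem ({1..d+1} - B)" for B :: "nat set"
  define S where "S B = {w \<in> B \<rightarrow>\<^sub>E (UNIV :: 'g set). u (missing B) (w(missing B := 0)) = 1}" for B
  have S: "S \<in> box_families d" unfolding box_families_def S_def by auto
  have face: "ind (S ({1..d+1} - {j})) (restrict x ({1..d+1} - {j})) = u j x"
    if x: "x \<in> cube (d+1)" and j: "j \<in> {1..d+1}" for x j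
  proof -
    have "{1..d+1} - ({1..d+1} - {j}) = {j}" using j by auto
    then have missing_j: "missing ({1..d+1} - {j}) = j" unfolding missing_def by simp
    have "(restrict x ({1..d+1} - {j}))(j := 0) = x(j := 0)"
      using x unfolding cube_def by (auto simp: fun_eq_iff PiE_def extensional_def)
    then have "u j ((restrict x ({1..d+1} - {j}))(j := 0)) = u j x"
      using u_free unfolding coordinate_free_def by metis
    then show ?thesis unfolding ind_def S_def missing_j using u_01[of j x] by auto
  qed
  have "box_correlation d g S = \<bar>avg (cube (d+1)) (\<lambda>x. g x * (\<Prod>j\<in>{1..d+1}. u j x))\<bar>"
    unfolding box_correlation_def prod_box_faces
    by (intro arg_cong[where f=abs] avg_cong arg_cong[where f="\<lambda>p. g _ * p"] prod.cong refl face)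
  then show ?thesis using box_correlation_le_box_norm[OF S, of g] by simp
qed

definition shift_first :: "'g::plus \<Rightarrow> (nat \<Rightarrow> 'g) \<Rightarrow> nat \<Rightarrow> 'g" where
  "shift_first c y = y(1 := y 1 + c)"

lemma sum_shift_first:
  "(\<Sum>i\<in>{1..d+1}. shift_first c y i) = (c::'g::ab_group_add) + (\<Sum>i\<in>{1..d+1::nat}. y i)"
proof -
  have one: "(1::nat) \<in> {1..d+1}" by simp
  have "(\<Sum>i\<in>{1..d+1}. shift_first c y i) = shift_first c y 1 + (\<Sum>i\<in>{1..d+1} - {1}. shift_first c y i)"
    by (rule sum.remove[OF _ one]) simp
  also have "(\<Sum>i\<in>{1..d+1} - {1}. shift_first c y i) = (\<Sum>i\<in>{1..d+1} - {1}. y i)"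
    by (rule sum.cong) (auto simp: shift_first_def)
  also have "(\<Sum>i\<in>{1..d+1}. y i) = y 1 + (\<Sum>i\<in>{1..d+1} - {1}. y i)"
    by (rule sum.remove[OF _ one]) simp
  ultimately show ?thesis by (simp add: shift_first_def ac_simps)
qed

text \<open>By the substitution \<open>y\<^sub>1 \<mapsto> y\<^sub>1 - c\<close>.\<close>
lemma abs_weighted_avg_shift_first_le_box_norm:
  fixes g :: "(nat \<Rightarrow> 'g::{finite,ab_group_add}) \<Rightarrow> real"
  assumes u_free: "coordinate_free u" and u_01: "\<And>j x. u j x \<in> {0, 1}"
  shows "\<bar>avg (cube (d+1)) (\<lambda>y. g (shift_first c y) * (\<Prod>j\<in>{1..d+1}. u j y))\<bar> \<le> box_norm d g"
proof -
  define u' where "u' j y = u j (shift_first (- c) y)" for j y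
  have inverse: "shift_first (- c) (shift_first c y) = y" "shift_first c (shift_first (- c) y) = y"
    for y :: "nat \<Rightarrow> 'g"
    unfolding shift_first_def by (auto simp: fun_eq_iff)
  have in_cube: "shift_first c' y \<in> cube (d+1)" if "y \<in> cube (d+1)" for c' y
    using that unfolding shift_first_def cube_def by (auto simp: PiE_def extensional_def)
  have "(\<Sum>y\<in>cube (d+1). g (shift_first c y) * (\<Prod>j\<in>{1..d+1}. u j y))
      = (\<Sum>y\<in>cube (d+1). g y * (\<Prod>j\<in>{1..d+1}. u' j y))"
    by (rule sum.reindex_bij_witness[where i="shift_first (- c)" and j="shift_first c"])
       (auto simp: in_cube u'_def inverse simp del: One_nat_def Suc_eq_plus1)
  then have "avg (cube (d+1)) (\<lambda>y. g (shift_first c y) * (\<Prod>j\<in>{1..d+1}. u j y))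
      = avg (cube (d+1)) (\<lambda>y. g y * (\<Prod>j\<in>{1..d+1}. u' j y))"
    unfolding avg_def by simp
  moreover have "shift_first (- c) (y(j := a)) = (shift_first (- c) y)(j := (if j = 1 then a - c else a))"
    for y j a
    unfolding shift_first_def by (auto simp: fun_eq_iff)
  then have "coordinate_free u'"
    using u_free unfolding coordinate_free_def u'_def by simp
  moreover have "u' j y \<in> {0, 1}" for j y
    unfolding u'_def by (rule u_01)
  ultimately show ?thesis
    using abs_weighted_avg_le_box_norm[of u' d g] by simp
qed

section \<open>Counting\<close>

lemma prod_in_01: "(\<And>x. x \<in> A \<Longrightarrow> h x \<in> {0, 1}) \<Longrightarrow> prod h A \<in> {0, 1::real}"
proof (induction A rule: infinite_finite_induct)
  case (insert x F)
  then have "h x \<in> {0, 1}" "prod h F \<in> {0, 1}" by auto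
  with insert.hyps show ?case by auto
qed auto

lemma prod_as_coordinate_free_weights:
  fixes h :: "'e \<Rightarrow> (nat \<Rightarrow> 'a) \<Rightarrow> real"
  assumes "finite F"
    and ignores: "\<And>f. f \<in> F \<Longrightarrow> \<exists>j\<in>{1..m}. \<forall>y a. h f (y(j := a)) = h f y"
    and h_01: "\<And>f y. f \<in> F \<Longrightarrow> h f y \<in> {0, 1}"
  obtains u where "coordinate_free u" "\<And>j y. u j y \<in> {0, 1}"
    "\<And>y. (\<Prod>f\<in>F. h f y) = (\<Prod>j\<in>{1..m}. u j y)"
proof
  define jf where "jf f = (SOME j. j \<in> {1..m} \<and> (\<forall>y a. h f (y(j := a)) = h f y))" for f
  have jf: "jf f \<in> {1..m}" "h f (y(jf f := a)) = h f y" if "f \<in> F" for f y a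
    using someI_ex[OF ignores[OF that, unfolded Bex_def]] unfolding jf_def by auto
  define u where "u j y = (\<Prod>f\<in>{f \<in> F. jf f = j}. h f y)" for j y
  show "coordinate_free u"
    unfolding coordinate_free_def u_def by (auto intro!: prod.cong simp: jf)
  show "u j y \<in> {0, 1}" for j y
    unfolding u_def by (rule prod_in_01) (use h_01 in blast)
  show "(\<Prod>f\<in>F. h f y) = (\<Prod>j\<in>{1..m}. u j y)" for y
    unfolding u_def by (rule prod.group[symmetric]) (use assms(1) jf in auto)
qed

definition glue :: "('v \<Rightarrow> nat) \<Rightarrow> 'v set \<Rightarrow> (nat \<Rightarrow> 'g) \<Rightarrow> ('v \<Rightarrow> 'g) \<Rightarrow> 'v \<Rightarrow> 'g" where
  "glue \<rho> S y z v = (if v \<in> S then y (\<rho> v) else z v)"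

lemma sum_PiE_glue:
  fixes F :: "('v \<Rightarrow> 'g::finite) \<Rightarrow> real"
  assumes "S \<subseteq> V" "bij_betw \<rho> S {1..m}"
  shows "(\<Sum>x\<in>V \<rightarrow>\<^sub>E UNIV. F x) = (\<Sum>z\<in>(V - S) \<rightarrow>\<^sub>E UNIV. \<Sum>y\<in>cube m. F (glue \<rho> S y z))"
proof -
  define \<sigma> where "\<sigma> = inv_into S \<rho>"
  have \<rho>: "\<rho> v \<in> {1..m}" "\<sigma> (\<rho> v) = v" if "v \<in> S" for v
    using that assms(2) unfolding \<sigma>_def by (auto simp: bij_betw_def)
  have \<sigma>: "\<sigma> i \<in> S" "\<rho> (\<sigma> i) = i" if "i \<in> {1..m}" for i
    using that assms(2) unfolding \<sigma>_def by (auto simp: bij_betw_def inv_into_into f_inv_into_f)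
  let ?split = "\<lambda>x. (restrict (x \<circ> \<sigma>) {1..m}, restrict x (V - S))"
  have "(\<Sum>x\<in>V \<rightarrow>\<^sub>E UNIV. F x) = (\<Sum>p\<in>cube m \<times> ((V - S) \<rightarrow>\<^sub>E UNIV). F (glue \<rho> S (fst p) (snd p)))"
  proof (rule sum.reindex_bij_witness[where i="\<lambda>p. glue \<rho> S (fst p) (snd p)" and j="?split"])
    fix x :: "'v \<Rightarrow> 'g" assume x: "x \<in> V \<rightarrow>\<^sub>E UNIV"
    show "glue \<rho> S (fst (?split x)) (snd (?split x)) = x"
      using x \<rho> by (auto simp: glue_def PiE_def extensional_def fun_eq_iff)
    then show "F (glue \<rho> S (fst (?split x)) (snd (?split x))) = F x"
      by simp
    show "?split x \<in> cube m \<times> ((V - S) \<rightarrow>\<^sub>E UNIV)"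
      unfolding cube_def by auto
  next
    fix p :: "(nat \<Rightarrow> 'g) \<times> ('v \<Rightarrow> 'g)" assume p: "p \<in> cube m \<times> ((V - S) \<rightarrow>\<^sub>E UNIV)"
    show "?split (glue \<rho> S (fst p) (snd p)) = p"
      using p \<sigma> by (cases p) (auto simp: glue_def cube_def PiE_def extensional_def fun_eq_iff)
    show "glue \<rho> S (fst p) (snd p) \<in> V \<rightarrow>\<^sub>E UNIV"
      using p assms(1) by (auto simp: glue_def PiE_def extensional_def)
  qed
  also have "\<dots> = (\<Sum>y\<in>cube m. \<Sum>z\<in>(V - S) \<rightarrow>\<^sub>E UNIV. F (glue \<rho> S y z))"
    by (simp add: sum.cartesian_product split_beta)
  also have "\<dots> = (\<Sum>z\<in>(V - S) \<rightarrow>\<^sub>E UNIV. \<Sum>y\<in>cube m. F (glue \<rho> S y z))"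
    by (rule sum.swap)
  finally show ?thesis .
qed

lemma avg_PiE_glue:
  fixes F :: "('v \<Rightarrow> 'g::finite) \<Rightarrow> real"
  assumes "S \<subseteq> V" "bij_betw \<rho> S {1..m}"
  shows "avg (V \<rightarrow>\<^sub>E UNIV) F = avg ((V - S) \<rightarrow>\<^sub>E UNIV) (\<lambda>z. avg (cube m) (\<lambda>y. F (glue \<rho> S y z)))"
proof -
  have "real (card (V \<rightarrow>\<^sub>E (UNIV :: 'g set)))
      = real (card ((V - S) \<rightarrow>\<^sub>E (UNIV :: 'g set))) * real (card (cube m :: (nat \<Rightarrow> 'g) set))"
    using sum_PiE_glue[OF assms, of "\<lambda>_. 1"] by simp
  then show ?thesis
    unfolding avg_def sum_PiE_glue[OF assms]
    by (simp add: sum_divide_distrib[symmetric] mult.commute)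
qed

lemma glue_upd_other:
  assumes "inj_on \<rho> S" "w \<in> S" "v \<noteq> w"
  shows "glue \<rho> S (y(\<rho> w := a)) z v = glue \<rho> S y z v"
  using assms inj_onD[OF assms(1)] unfolding glue_def by auto

lemma sum_glue_edge:
  fixes y :: "nat \<Rightarrow> 'g::ab_group_add"
  assumes "finite e" "S \<subseteq> e" "bij_betw \<rho> S {1..d+1}"
  shows "(\<Sum>v\<in>e. glue \<rho> S y z v) = (\<Sum>i\<in>{1..d+1}. shift_first (\<Sum>v\<in>e - S. z v) y i)"
proof -
  have "(\<Sum>v\<in>e. glue \<rho> S y z v) = (\<Sum>v\<in>e - S. glue \<rho> S y z v) + (\<Sum>v\<in>S. glue \<rho> S y z v)"
    by (rule sum.subset_diff[OF assms(2,1)])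
  also have "\<dots> = (\<Sum>v\<in>e - S. z v) + (\<Sum>v\<in>S. y (\<rho> v))"
    unfolding glue_def by (intro arg_cong2[where f="(+)"] sum.cong) auto
  also have "(\<Sum>v\<in>S. y (\<rho> v)) = (\<Sum>i\<in>{1..d+1}. y i)"
    using assms(3) by (rule sum.reindex_bij_betw)
  finally show ?thesis by (simp only: sum_shift_first)
qed

lemma abs_avg_glue_edge_deviation_le_box_norm:
  fixes A :: "'g::{finite,ab_group_add} set"
  assumes "finite e" "S \<subseteq> e" and \<rho>: "bij_betw \<rho> S {1..d+1}"
    and "finite F" and S_not_in_F: "\<forall>f\<in>F. \<not> S \<subseteq> f"
  shows "\<bar>avg (cube (d+1)) (\<lambda>y. (ind A (\<Sum>v\<in>e. glue \<rho> S y z v) - density A)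
           * (\<Prod>f\<in>F. ind A (\<Sum>v\<in>f. glue \<rho> S y z v)))\<bar>
         \<le> box_norm d (\<lambda>x. Gamma (d+1) A x - density A)"
proof -
  have ignores: "\<exists>j\<in>{1..d+1}. \<forall>y a.
      ind A (\<Sum>v\<in>f. glue \<rho> S (y(j := a)) z v) = ind A (\<Sum>v\<in>f. glue \<rho> S y z v)"
    if "f \<in> F" for f
  proof -
    obtain w where "w \<in> S" "w \<notin> f" using S_not_in_F \<open>f \<in> F\<close> by blast
    then have "(\<Sum>v\<in>f. glue \<rho> S (y(\<rho> w := a)) z v) = (\<Sum>v\<in>f. glue \<rho> S y z v)" for y a
      using \<rho> by (intro sum.cong refl glue_upd_other) (auto simp: bij_betw_def)
    moreover have "\<rho> w \<in> {1..d+1}" using \<open>w \<in> S\<close> \<rho> by (auto simp: bij_betw_def)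
    ultimately show ?thesis by metis
  qed
  obtain u where u: "coordinate_free u" "\<And>j y. u j y \<in> {0, 1}"
    "\<And>y. (\<Prod>f\<in>F. ind A (\<Sum>v\<in>f. glue \<rho> S y z v)) = (\<Prod>j\<in>{1..d+1}. u j y)"
    by (rule prod_as_coordinate_free_weights[OF \<open>finite F\<close>,
          where h="\<lambda>f y. ind A (\<Sum>v\<in>f. glue \<rho> S y z v)", OF ignores]) (auto simp: ind_def)
  show ?thesis
    using abs_weighted_avg_shift_first_le_box_norm[OF u(1,2), of d
        "\<lambda>x. Gamma (d+1) A x - density A" "\<Sum>v\<in>e - S. z v"]
    by (simp add: sum_glue_edge[OF assms(1,2) \<rho>] u(3) Gamma_def)
qed

lemma abs_avg_edge_deviation_le_box_norm:
  fixes A :: "'g::{finite,ab_group_add} set" and V :: "'v set"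
  assumes "finite V" "e \<subseteq> V" "S \<subseteq> e" "card S = d+1"
    and "finite F" "\<forall>f\<in>F. \<not> S \<subseteq> f"
  shows "\<bar>avg (V \<rightarrow>\<^sub>E UNIV)
           (\<lambda>x. (ind A (\<Sum>v\<in>e. x v) - density A) * (\<Prod>f\<in>F. ind A (\<Sum>v\<in>f. x v)))\<bar>
         \<le> box_norm d (\<lambda>x. Gamma (d+1) A x - density A)"
proof -
  have "finite e" "finite S" using assms(1-3) by (auto intro: finite_subset)
  then obtain \<sigma> where "bij_betw \<sigma> {1..d+1} S"
    using ex_bij_betw_nat_finite_1 assms(4) by metis
  then have \<rho>: "bij_betw (inv_into {1..d+1} \<sigma>) S {1..d+1}"
    by (rule bij_betw_inv_into)
  have "finite ((V - S) \<rightarrow>\<^sub>E (UNIV :: 'g set))" "(V - S) \<rightarrow>\<^sub>E (UNIV :: 'g set) \<noteq> {}"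
    using assms(1) by (auto intro: finite_PiE simp: PiE_eq_empty_iff)
  then show ?thesis
    unfolding avg_PiE_glue[OF subset_trans[OF assms(3,2)] \<rho>]
    using abs_avg_glue_edge_deviation_le_box_norm[OF \<open>finite e\<close> assms(3) \<rho> assms(5,6)]
    by (rule abs_avg_le_bound)
qed

lemma density_bounds: "0 \<le> density (A :: 'g::finite set)" "density A \<le> 1"
proof -
  have "card A \<le> card (UNIV :: 'g set)" by (rule card_mono) auto
  then show "0 \<le> density A" "density A \<le> 1"
    unfolding density_def by (auto simp: finite_UNIV_card_ge_0 divide_le_eq_1)
qed

lemma counting_lemma:
  fixes A :: "'g::{finite,ab_group_add} set" and V :: "'v set"
  assumes "finite V" and "\<forall>e\<in>E. e \<subseteq> V" and simple: "simple_hypergraph (d+1) E"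
    and "finite F" and "F \<subseteq> E"
  shows "\<bar>avg (V \<rightarrow>\<^sub>E UNIV) (\<lambda>x. \<Prod>e\<in>F. ind A (\<Sum>v\<in>e. x v)) - density A ^ card F\<bar>
     \<le> real (card F) * box_norm d (\<lambda>x. Gamma (d+1) A x - density A)"
  using \<open>finite F\<close> \<open>F \<subseteq> E\<close>
proof (induction F rule: finite_induct)
  case empty
  show ?case using assms(1) by (simp add: avg_const finite_PiE PiE_eq_empty_iff)
next
  case (insert e F)
  let ?\<beta> = "box_norm d (\<lambda>x. Gamma (d+1) A x - density A)"
  let ?\<delta> = "density A"
  define X where "X = avg (V \<rightarrow>\<^sub>E UNIV) (\<lambda>x. (ind A (\<Sum>v\<in>e. x v) - ?\<delta>) * (\<Prod>f\<in>F. ind A (\<Sum>v\<in>f. x v)))"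
  define Y where "Y = avg (V \<rightarrow>\<^sub>E UNIV) (\<lambda>x. \<Prod>f\<in>F. ind A (\<Sum>v\<in>f. x v))"
  have "e \<in> E" using insert.prems by simp
  then obtain S where S: "S \<subseteq> e" "card S = d+1" "\<forall>e'\<in>E. e' \<noteq> e \<longrightarrow> \<not> S \<subseteq> e'"
    using simple unfolding simple_hypergraph_def by blast
  have "\<forall>f\<in>F. \<not> S \<subseteq> f" using S(3) insert.prems insert.hyps(2) by auto
  then have X: "\<bar>X\<bar> \<le> ?\<beta>"
    unfolding X_def using assms(1,2) insert S(1,2)
    by (intro abs_avg_edge_deviation_le_box_norm) auto
  have Y: "\<bar>Y - ?\<delta> ^ card F\<bar> \<le> real (card F) * ?\<beta>"
    unfolding Y_def using insert.IH insert.prems by auto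
  have "avg (V \<rightarrow>\<^sub>E UNIV) (\<lambda>x. \<Prod>f\<in>insert e F. ind A (\<Sum>v\<in>f. x v)) = X + ?\<delta> * Y"
    unfolding X_def Y_def avg_cmult[symmetric] avg_add[symmetric]
    by (rule avg_cong) (simp add: insert.hyps algebra_simps)
  then have "\<bar>avg (V \<rightarrow>\<^sub>E UNIV) (\<lambda>x. \<Prod>f\<in>insert e F. ind A (\<Sum>v\<in>f. x v)) - ?\<delta> ^ card (insert e F)\<bar>
      = \<bar>X + ?\<delta> * (Y - ?\<delta> ^ card F)\<bar>"
    using insert.hyps by (simp add: algebra_simps)
  also have "\<dots> \<le> \<bar>X\<bar> + ?\<delta> * \<bar>Y - ?\<delta> ^ card F\<bar>"
    using abs_triangle_ineq[of X "?\<delta> * (Y - ?\<delta> ^ card F)"] density_bounds(1)[of A]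
    by (simp add: abs_mult)
  also have "\<dots> \<le> ?\<beta> + 1 * (real (card F) * ?\<beta>)"
    using X Y density_bounds[of A] by (intro add_mono mult_mono) auto
  also have "\<dots> = real (card (insert e F)) * ?\<beta>"
    using insert.hyps by (simp add: algebra_simps)
  finally show ?case .
qed

theorem mainTheorem5:
  fixes k d :: nat and A :: "'g::{finite,ab_group_add} set"
    and V :: "'v set" and E :: "'v set set"
  assumes "1 \<le> d" and "d < k"
    and "uniform_hypergraph k V E"
    and "simple_hypergraph (d+1) E"
  shows "\<bar>hom_density V E A - density A ^ card E\<bar>
           \<le> real (card E) * box_norm d (\<lambda>x. Gamma (d+1) A x - density A)
       \<and> real (card E) * box_norm d (\<lambda>x. Gamma (d+1) A x - density A)
           \<le> real (card E) * gowers_norm (d+1) (\<lambda>y. ind A y - density A)"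
proof
  have V: "finite V" and E: "\<forall>e\<in>E. e \<subseteq> V"
    using assms(3) unfolding uniform_hypergraph_def by auto
  then have "finite E" by (meson Pow_iff finite_Pow_iff finite_subset subsetI)
  with V E assms(4) show "\<bar>hom_density V E A - density A ^ card E\<bar>
      \<le> real (card E) * box_norm d (\<lambda>x. Gamma (d+1) A x - density A)"
    unfolding hom_density_def by (intro counting_lemma) auto
  have "box_norm d (\<lambda>x. Gamma (d+1) A x - density A) \<le> gowers_norm (d+1) (\<lambda>y. ind A y - density A)"
    unfolding Gamma_def
    by (rule box_norm_le) (rule box_correlation_sum_le_gowers_norm)
  then show "real (card E) * box_norm d (\<lambda>x. Gamma (d+1) A x - density A)
      \<le> real (card E) * gowers_norm (d+1) (\<lambda>y. ind A y - density A)"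
    by (rule mult_left_mono) simp
qed

end
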